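(* Let $\mathfrak u=(a_0,a_1,\dots)$ be a (finite or infinite) sequence of non-negative integers such that $\Upsilon^{(6)}(\mathfrak u)=\mathfrak u$. Then $\mathfrak u$ has at most one champion.
   Context: For a finite or infinite sequence $\mathfrak u=(a_0,a_1,\dots)$ of non-negative integers, the P-G triangle generated by $\mathfrak u$ consists of the numbers $d_k^{(j)}$ defined by $d_k^{(0)}=a_k$ and $d_k^{(j+1)}=|d_{k+1}^{(j)}-d_k^{(j)}|$ for $j,k\ge 0$ (for a finite sequence $(a_0,\dots,a_{N-1})$, for $0\le k\le N-1-j$). The operator $\Upsilon$ sends $\mathfrak u$ to the left edge $(d_0^{(0)},d_0^{(1)},d_0^{(2)},\dots)$ of its P-G triangle (a sequence of the same length as $\mathfrak u$); $\Upsilon^{(n)}$ denotes its $n$-th iterate. The term $a_n$ ($n\ge0$) is a champion of $\mathfrak u$ if $a_n>0$ and $a_j<a_n$ for all $0\le j<n$. *)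

theory Defs
  imports Main "HOL-Library.Extended_Nat"
begin

text \<open>A sequence (finite of length L, or infinite when L = \<infinity>) of non-negative
integers is represented by a function a :: nat \<Rightarrow> nat together with its length
L :: enat; only the values a k with k < L are meaningful.\<close>

fun pg :: "(nat \<Rightarrow> nat) \<Rightarrow> nat \<Rightarrow> nat \<Rightarrow> nat" where
  "pg a 0 k = a k"
| "pg a (Suc j) k = nat \<bar>int (pg a j (Suc k)) - int (pg a j k)\<bar>"

text \<open>Left edge of the P-G triangle. Entry j depends only on a 0, ..., a j, so for a
finite sequence of length L the first L entries are the finite Upsilon.\<close>
definition Upsilon :: "(nat \<Rightarrow> nat) \<Rightarrow> (nat \<Rightarrow> nat)" where
  "Upsilon a = (\<lambda>j. pg a j 0)"

definition champion :: "(nat \<Rightarrow> nat) \<Rightarrow> nat \<Rightarrow> bool" where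
  "champion a n \<longleftrightarrow> a n > 0 \<and> (\<forall>j<n. a j < a n)"

end

theory Submission
  imports Defs
begin

text \<open>An absolute difference of two numbers never exceeds their maximum, so \<open>\<Upsilon>\<close>
preserves upper bounds on initial segments. If \<open>a\<^sub>n\<close> is larger than all earlier terms,
then \<open>d\<^sub>0\<^sup>(\<^sup>n\<^sup>) \<le> a\<^sub>n\<close>, with equality only when all earlier terms vanish (induction along
the diagonal of the triangle ending at \<open>a\<^sub>n\<close>). Hence if \<open>a\<^sub>n\<close> is a champion preceded by a
positive term, \<open>\<Upsilon>\<close> pushes all of \<open>a\<^sub>0, \<dots>, a\<^sub>n\<close> below \<open>a\<^sub>n\<close>, they stay there under
further iterates, and no iterate \<open>\<Upsilon>\<^sup>(\<^sup>k\<^sup>)\<close> with \<open>k > 0\<close> can fix \<open>a\<^sub>n\<close>.\<close>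

lemma pg_le_if_window_le:
  assumes "\<forall>i. k \<le> i \<and> i \<le> k + j \<longrightarrow> a i \<le> B"
  shows "pg a j k \<le> B"
  using assms
proof (induction j arbitrary: k)
  case (Suc j)
  have "pg a j (Suc k) \<le> B" and "pg a j k \<le> B"
    using Suc.prems by (auto intro!: Suc.IH)
  then show ?case by simp
qed simp

lemma Upsilon_le_if_prefix_le:
  assumes "\<forall>i\<le>n. a i \<le> B"
  shows "\<forall>i\<le>n. Upsilon a i \<le> B"
  using assms unfolding Upsilon_def by (auto intro!: pg_le_if_window_le)

lemma funpow_Upsilon_le_if_prefix_le:
  assumes "\<forall>i\<le>n. a i \<le> B"
  shows "\<forall>i\<le>n. (Upsilon ^^ m) a i \<le> B"
  using assms by (induction m) (auto dest: Upsilon_le_if_prefix_le)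

lemma pg_eq_if_window_zero:
  assumes "\<forall>i. k < i \<and> i \<le> k + j \<longrightarrow> a i = 0"
  shows "pg a j k = a k"
  using assms
proof (induction j arbitrary: k)
  case (Suc j)
  have "pg a j (Suc k) = 0" and "pg a j k = a k"
    using Suc.prems Suc.IH[of "Suc k"] Suc.IH[of k] by auto
  then show ?case by simp
qed simp

lemma nat_abs_diff_le_max: "nat \<bar>int y - int x\<bar> \<le> max y x"
  by arith

lemma nat_abs_diff_eq_bound:
  assumes "nat \<bar>int y - int x\<bar> = A" "y \<le> A" "x < A"
  shows "y = A" and "x = 0"
  using assms by arith+

lemma pg_diagonal_le_last:
  assumes "\<forall>i. k \<le> i \<and> i < k + j \<longrightarrow> a i < a (k + j)"
  shows "pg a j k \<le> a (k + j) \<and>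
    (pg a j k = a (k + j) \<longrightarrow> (\<forall>i. k \<le> i \<and> i < k + j \<longrightarrow> a i = 0))"
  using assms
proof (induction j arbitrary: k)
  case (Suc j)
  define A where "A = a (Suc k + j)"
  define D where "D = pg a j (Suc k)"
  define x where "x = pg a j k"
  have "\<forall>i. Suc k \<le> i \<and> i < Suc k + j \<longrightarrow> a i < a (Suc k + j)"
    using Suc.prems by simp
  from Suc.IH[OF this] have "D \<le> A" and D_eq: "D = A \<Longrightarrow> \<forall>i. Suc k \<le> i \<and> i < Suc k + j \<longrightarrow> a i = 0"
    unfolding A_def D_def by blast+
  have "a k < A"
    using Suc.prems[rule_format, of k] by (simp add: A_def)
  then obtain B where "A = Suc B"
    using less_imp_Suc_add by blast
  have "\<forall>i. k \<le> i \<and> i \<le> k + j \<longrightarrow> a i \<le> B"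
    using Suc.prems \<open>A = Suc B\<close> unfolding A_def by (simp add: less_Suc_eq_le)
  then have "x < A"
    unfolding x_def \<open>A = Suc B\<close> by (simp add: pg_le_if_window_le le_imp_less_Suc)
  have pg_Suc: "pg a (Suc j) k = nat \<bar>int D - int x\<bar>"
    by (simp add: D_def x_def)
  have "pg a (Suc j) k \<le> A"
    unfolding pg_Suc using nat_abs_diff_le_max[of D x] \<open>D \<le> A\<close> \<open>x < A\<close> by linarith
  moreover have "\<forall>i. k \<le> i \<and> i < k + Suc j \<longrightarrow> a i = 0" if "pg a (Suc j) k = A"
  proof -
    have "D = A" and "x = 0"
      using nat_abs_diff_eq_bound[OF that[unfolded pg_Suc] \<open>D \<le> A\<close> \<open>x < A\<close>] by simp_all
    then have later_zero: "\<forall>i. Suc k \<le> i \<and> i < Suc k + j \<longrightarrow> a i = 0"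
      using D_eq by blast
    then have "a k = 0"
      using \<open>x = 0\<close> pg_eq_if_window_zero[of k j a] by (simp add: x_def)
    with later_zero show ?thesis
      by (metis Suc_leI add_Suc_shift le_neq_implies_less)
  qed
  moreover have "a (k + Suc j) = A"
    by (simp add: A_def)
  ultimately show ?case
    by simp
qed simp

lemma Upsilon_less_if_earlier_less:
  assumes "\<forall>i<n. a i < a n" and "i\<^sub>0 < n" "a i\<^sub>0 \<noteq> 0"
  shows "Upsilon a n < a n"
  using assms pg_diagonal_le_last[of 0 n a] by (fastforce simp: Upsilon_def le_less)

lemma funpow_Upsilon_less_if_earlier_less:
  assumes "\<forall>i<n. a i < a n" and "i\<^sub>0 < n" "a i\<^sub>0 \<noteq> 0" and "0 < k"
  shows "(Upsilon ^^ k) a n < a n"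
proof -
  obtain k' where "k = Suc k'"
    using \<open>0 < k\<close> gr0_implies_Suc by blast
  obtain B where "a n = Suc B"
    using assms(1-2) less_imp_Suc_add by blast
  have "Upsilon a i \<le> B" if "i \<le> n" for i
  proof (cases "i = n")
    case True
    then show ?thesis
      using Upsilon_less_if_earlier_less[OF assms(1-3)] \<open>a n = Suc B\<close> by simp
  next
    case False
    with \<open>i \<le> n\<close> have "\<forall>i'\<le>i. a i' \<le> B"
      using assms(1) \<open>a n = Suc B\<close> by (metis le_neq_implies_less less_Suc_eq_le order.strict_trans1)
    then show ?thesis
      using Upsilon_le_if_prefix_le by blast
  qed
  then have "(Upsilon ^^ k') (Upsilon a) n \<le> B"
    using funpow_Upsilon_le_if_prefix_le by blast
  then show ?thesis
    unfolding \<open>k = Suc k'\<close> \<open>a n = Suc B\<close> funpow_Suc_right comp_apply by simp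
qed

theorem theorem2p4:
  fixes a :: "nat \<Rightarrow> nat" and L :: enat
  assumes "\<forall>n. enat n < L \<longrightarrow> (Upsilon ^^ 6) a n = a n"
  shows "\<forall>m n. enat m < L \<and> enat n < L \<and> champion a m \<and> champion a n \<longrightarrow> m = n"
proof (intro allI impI)
  fix m n
  assume "enat m < L \<and> enat n < L \<and> champion a m \<and> champion a n"
  moreover have "\<not> m < n" if "enat n < L" "champion a m" "champion a n" for m n
    using funpow_Upsilon_less_if_earlier_less[of n a m 6] assms that
    unfolding champion_def by (metis less_irrefl zero_less_numeral not_gr0)
  ultimately show "m = n"
    by (meson linorder_neqE_nat)
qed

end
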